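(* Let $d\geqslant1$, $\varepsilon\geqslant0$, let $P\in C^1([0,\infty);[0,\infty))\cap C^2((0,\infty);[0,\infty))$ be convex with $\kappa:=P'(0)>0$, let $\theta>0$, and let $\tau$ be the solution of $\ddot\tau=2\kappa/\tau$, $\tau(0)=1$, $\dot\tau(0)=0$. Consider a nonnegative density $R(t,y)$ and a velocity field $U(t,y)$, $t\geqslant0$, $y\in\mathbb R^d$. Suppose that the mass $\int_{\mathbb R^d}R(t,y)\,\mathrm dy$ is bounded and that the pseudo-energy $$\mathcal E(t)=\frac1{2\tau^2}\int R|U|^2+\frac{\varepsilon^2}{2\tau^2}\int|\nabla\sqrt R|^2+\kappa\int(R|y|^2+R\ln R)+\frac{\tau^d}{\theta}\int G\!\left(\frac{\theta R}{\tau^d}\right)$$ satisfies $\mathcal E(t)\leqslant\Lambda$ for all $t\geqslant0$. Then there exists $C_0>0$ such that for all $t\geqslant0$, $$\frac1{2\tau^2}\int R|U|^2+\frac{\varepsilon^2}{2\tau^2}\int|\nabla\sqrt R|^2+\kappa\int R(1+|y|^2+|\ln R|)+\tau^d\int G\!\left(\frac{\theta R}{\tau^d}\right)\leqslant C_0.$$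
   Context: All integrals are over $\mathbb R^d$ in $y$. $G(u)=\int_0^u\int_0^v\frac{P'(\sigma)-P'(0)}{\sigma}\,\mathrm d\sigma\,\mathrm dv$. *)

theory Defs
  imports "HOL-Analysis.Analysis"
begin

definition test_fun :: "('a::euclidean_space \<Rightarrow> real) \<Rightarrow> ('a \<Rightarrow> 'a) \<Rightarrow> bool" where
  "test_fun phi Dphi \<longleftrightarrow>
     (\<forall>y. (phi has_derivative (\<lambda>h. Dphi y \<bullet> h)) (at y)) \<and>
     continuous_on UNIV Dphi \<and> bounded {y. phi y \<noteq> 0}"

definition weak_gradient :: "('a::euclidean_space \<Rightarrow> real) \<Rightarrow> ('a \<Rightarrow> 'a) \<Rightarrow> bool" where
  "weak_gradient f g \<longleftrightarrow>
     (\<forall>phi Dphi. test_fun phi Dphi \<longrightarrow>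
        (\<integral>y. f y *\<^sub>R Dphi y \<partial>lborel) = - (\<integral>y. phi y *\<^sub>R g y \<partial>lborel))"

text \<open>G(u) = int_0^u int_0^v (P'(s) - P'(0))/s ds dv, with dP = P'. The integrand is
  nonnegative for convex P, so G is taken as a nonnegative extended real (possibly infinite).\<close>
definition Gfun :: "(real \<Rightarrow> real) \<Rightarrow> real \<Rightarrow> ennreal" where
  "Gfun dP u = (\<integral>\<^sup>+ v. indicator {0..u} v *
      (\<integral>\<^sup>+ s. indicator {0..v} s * ennreal ((dP s - dP 0) / s) \<partial>lborel) \<partial>lborel)"

end

theory Submission
  imports Defs "HOL-Probability.Probability"
begin

text \<open>
  The negative part of \<open>R ln R\<close> is controlled by a Gaussian: \<open>-r ln r \<le> r s / 2 + exp (-s / 2)\<close>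
  with \<open>s = |y|\<^sup>2\<close>. Integrating, \<open>\<integral> R ln R \<ge> -\<integral> R |y|\<^sup>2 / 2 - \<Gamma>\<close> with \<open>\<Gamma> = \<integral> exp (-|y|\<^sup>2 / 2)\<close>,
  so the energy term \<open>\<integral> R |y|\<^sup>2 + \<integral> R ln R\<close> is bounded below by \<open>-\<Gamma>\<close>. Hence all other
  terms of the energy are bounded by \<open>\<Lambda> + \<kappa> \<Gamma>\<close>, and \<open>\<integral> R (|y|\<^sup>2 + |ln R|)\<close> by a multiple of
  that energy term plus \<open>4 \<Gamma>\<close>. The sign of the \<open>G\<close>-term needs \<open>\<tau> > 0\<close>: while \<open>\<tau>\<close> is positive it is
  convex with \<open>\<tau>'(0) = 0\<close>, so it never drops below \<open>\<tau>(0) = 1\<close>.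
\<close>

lemma nn_integral_exp_neg_square_half_finite:
  "(\<integral>\<^sup>+x. ennreal (exp (- x\<^sup>2 / 2)) \<partial>lborel) < \<infinity>"
proof -
  have "(\<lambda>x::real. exp (- x\<^sup>2 / 2)) = (\<lambda>x. sqrt (2 * pi) * std_normal_density x)"
    by (simp add: std_normal_density_def fun_eq_iff)
  then have "integrable lborel (\<lambda>x::real. exp (- x\<^sup>2 / 2))"
    by simp
  then show ?thesis
    by (simp add: integrable_iff_bounded)
qed

lemma integrable_exp_neg_norm_square_half:
  "integrable lborel (\<lambda>y::'a::euclidean_space. exp (- (norm y)\<^sup>2 / 2))"
proof (rule integrableI_bounded)
  have factor: "ennreal (norm (exp (- (norm y)\<^sup>2 / 2)))
      = (\<Prod>b\<in>Basis. ennreal (exp (- (y \<bullet> b)\<^sup>2 / 2)))" for y :: 'a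
  proof -
    have "(norm y)\<^sup>2 = (\<Sum>b\<in>Basis. (y \<bullet> b)\<^sup>2)"
      unfolding power2_norm_eq_inner by (subst euclidean_inner) (simp only: power2_eq_square)
    then have "exp (- (norm y)\<^sup>2 / 2) = (\<Prod>b\<in>Basis. exp (- (y \<bullet> b)\<^sup>2 / 2))"
      by (simp add: sum_negf sum_divide_distrib flip: exp_sum)
    then show ?thesis
      by (simp add: prod_ennreal prod_nonneg)
  qed
  have "(\<integral>\<^sup>+y. ennreal (norm (exp (- (norm y)\<^sup>2 / 2))) \<partial>(lborel::'a measure))
      = (\<integral>\<^sup>+x. ennreal (exp (- x\<^sup>2 / 2)) \<partial>lborel) ^ DIM('a)"
    unfolding factor by (subst nn_integral_lborel_prod) auto
  also have "\<dots> < \<infinity>"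
    using nn_integral_exp_neg_square_half_finite
    by (simp add: less_top[symmetric] power_eq_top_ennreal)
  finally show "(\<integral>\<^sup>+y. ennreal (norm (exp (- (norm y)\<^sup>2 / 2))) \<partial>(lborel::'a measure)) < \<infinity>" .
qed measurable

lemma neg_xlnx_le:
  fixes r s :: real
  assumes "0 \<le> r"
  shows "- (r * ln r) \<le> r * s / 2 + exp (- s / 2)"
proof (cases "r = 0")
  case False
  with assms have r: "0 < r" by simp
  have "- s / 2 - ln r = ln (exp (- s / 2) / r)"
    using r by (simp add: ln_div)
  also have "\<dots> \<le> exp (- s / 2) / r - 1"
    using r by (intro ln_le_minus_one) simp
  finally have "r * (- s / 2 - ln r) \<le> r * (exp (- s / 2) / r)"
    using r by (intro mult_left_mono) auto
  with r show ?thesis by (simp add: algebra_simps)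
qed simp

context
  fixes f :: "'a::euclidean_space \<Rightarrow> real"
  assumes nonneg: "\<And>y. 0 \<le> f y"
    and integrable_moment: "integrable lborel (\<lambda>y. f y * (norm y)\<^sup>2)"
    and integrable_entropy: "integrable lborel (\<lambda>y. f y * ln (f y))"
begin

lemma entropy_ge_neg_half_moment:
  "- (\<integral>y. f y * (norm y)\<^sup>2 \<partial>lborel) / 2 - (\<integral>(y::'a). exp (- (norm y)\<^sup>2 / 2) \<partial>lborel)
    \<le> (\<integral>y. f y * ln (f y) \<partial>lborel)"
proof -
  have "(-1/2) * (f y * (norm y)\<^sup>2) - exp (- (norm y)\<^sup>2 / 2) \<le> f y * ln (f y)" for y
    using neg_xlnx_le[OF nonneg, of y "(norm y)\<^sup>2"] by simp
  then have "(\<integral>y. (-1/2) * (f y * (norm y)\<^sup>2) - exp (- (norm y)\<^sup>2 / 2) \<partial>lborel)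
      \<le> (\<integral>y. f y * ln (f y) \<partial>lborel)"
    by (intro Bochner_Integration.integral_mono Bochner_Integration.integrable_diff
        Bochner_Integration.integrable_mult_right integrable_moment
        integrable_exp_neg_norm_square_half integrable_entropy)
  also have "(\<integral>y. (-1/2) * (f y * (norm y)\<^sup>2) - exp (- (norm y)\<^sup>2 / 2) \<partial>lborel)
      = - (\<integral>y. f y * (norm y)\<^sup>2 \<partial>lborel) / 2 - (\<integral>(y::'a). exp (- (norm y)\<^sup>2 / 2) \<partial>lborel)"
    by (subst Bochner_Integration.integral_diff[OF
          Bochner_Integration.integrable_mult_right[OF integrable_moment]
          integrable_exp_neg_norm_square_half]) simp
  finally show ?thesis .
qed

lemma moment_plus_entropy_ge:
  "- (\<integral>(y::'a). exp (- (norm y)\<^sup>2 / 2) \<partial>lborel)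
    \<le> (\<integral>y. f y * (norm y)\<^sup>2 \<partial>lborel) + (\<integral>y. f y * ln (f y) \<partial>lborel)"
proof -
  have "0 \<le> (\<integral>y. f y * (norm y)\<^sup>2 \<partial>lborel)"
    using nonneg by (intro Bochner_Integration.integral_nonneg) simp
  then show ?thesis
    using entropy_ge_neg_half_moment by linarith
qed

lemma integrable_abs_entropy: "integrable lborel (\<lambda>y. f y * \<bar>ln (f y)\<bar>)"
proof -
  have "(\<lambda>y. f y * \<bar>ln (f y)\<bar>) = (\<lambda>y. \<bar>f y * ln (f y)\<bar>)"
    using nonneg by (simp add: abs_mult fun_eq_iff)
  then show ?thesis
    using Bochner_Integration.integrable_abs[OF integrable_entropy] by simp
qed

lemma abs_entropy_le:
  "(\<integral>y. f y * \<bar>ln (f y)\<bar> \<partial>lborel)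
    \<le> (\<integral>y. f y * ln (f y) \<partial>lborel) + (\<integral>y. f y * (norm y)\<^sup>2 \<partial>lborel)
      + 2 * (\<integral>(y::'a). exp (- (norm y)\<^sup>2 / 2) \<partial>lborel)"
proof -
  have "f y * \<bar>ln (f y)\<bar>
      \<le> f y * ln (f y) + f y * (norm y)\<^sup>2 + 2 * exp (- (norm y)\<^sup>2 / 2)" for y
  proof -
    have "- (f y * ln (f y)) \<le> f y * (norm y)\<^sup>2 / 2 + exp (- (norm y)\<^sup>2 / 2)"
      using neg_xlnx_le[OF nonneg] by simp
    moreover have "f y * \<bar>ln (f y)\<bar> = \<bar>f y * ln (f y)\<bar>"
      using nonneg[of y] by (simp add: abs_mult)
    ultimately show ?thesis
      using nonneg[of y] by (simp add: abs_le_iff)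
  qed
  then have "(\<integral>y. f y * \<bar>ln (f y)\<bar> \<partial>lborel)
      \<le> (\<integral>y. f y * ln (f y) + f y * (norm y)\<^sup>2 + 2 * exp (- (norm y)\<^sup>2 / 2) \<partial>lborel)"
    by (intro Bochner_Integration.integral_mono Bochner_Integration.integrable_add
        Bochner_Integration.integrable_mult_right integrable_abs_entropy integrable_entropy
        integrable_moment integrable_exp_neg_norm_square_half)
  also have "\<dots> = (\<integral>y. f y * ln (f y) \<partial>lborel) + (\<integral>y. f y * (norm y)\<^sup>2 \<partial>lborel)
      + 2 * (\<integral>(y::'a). exp (- (norm y)\<^sup>2 / 2) \<partial>lborel)"
    unfolding Bochner_Integration.integral_add[OF
        Bochner_Integration.integrable_add[OF integrable_entropy integrable_moment]
        Bochner_Integration.integrable_mult_right[OF integrable_exp_neg_norm_square_half]]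
      Bochner_Integration.integral_add[OF integrable_entropy integrable_moment]
    by simp
  finally show ?thesis .
qed

lemma weighted_entropy_le:
  assumes integrable: "integrable lborel f"
  shows "(\<integral>y. f y * (1 + (norm y)\<^sup>2 + \<bar>ln (f y)\<bar>) \<partial>lborel)
    \<le> (\<integral>y. f y \<partial>lborel)
      + 3 * ((\<integral>y. f y * (norm y)\<^sup>2 \<partial>lborel) + (\<integral>y. f y * ln (f y) \<partial>lborel))
      + 4 * (\<integral>(y::'a). exp (- (norm y)\<^sup>2 / 2) \<partial>lborel)"
proof -
  have split: "(\<integral>y. f y * (1 + (norm y)\<^sup>2 + \<bar>ln (f y)\<bar>) \<partial>lborel)
      = (\<integral>y. f y \<partial>lborel) + (\<integral>y. f y * (norm y)\<^sup>2 \<partial>lborel)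
        + (\<integral>y. f y * \<bar>ln (f y)\<bar> \<partial>lborel)"
    by (simp add: distrib_left integrable integrable_moment integrable_abs_entropy)
  show ?thesis
    using split abs_entropy_le entropy_ge_neg_half_moment by (simp only: distrib_left)
qed

end

lemma nondecreasing_if_derivative_nonneg:
  fixes f f' :: "real \<Rightarrow> real"
  assumes deriv: "\<forall>t\<ge>0. (f has_real_derivative f' t) (at t within {0..})"
    and nonneg: "\<And>t. 0 < t \<Longrightarrow> t < u \<Longrightarrow> 0 \<le> f' t"
    and "0 \<le> u"
  shows "f 0 \<le> f u"
proof (rule DERIV_nonneg_imp_increasing_open[OF \<open>0 \<le> u\<close>])
  fix t :: real
  assume t: "0 < t" "t < u"
  have "at t within {0..} = at t"
    using t by (intro at_within_interior) simp
  then show "\<exists>y. (f has_real_derivative y) (at t) \<and> 0 \<le> y"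
    using deriv t nonneg[OF t] by (metis less_imp_le)
next
  have "continuous_on {0..} f"
    using deriv by (intro DERIV_continuous_on) auto
  then show "continuous_on {0..u} f"
    by (rule continuous_on_subset) auto
qed

lemma tau_gt_half:
  fixes \<tau> \<tau>' :: "real \<Rightarrow> real" and \<kappa> :: real
  assumes "0 < \<kappa>" and "\<tau> 0 = 1" "\<tau>' 0 = 0"
    and \<tau>_deriv: "\<forall>t\<ge>0. (\<tau> has_real_derivative \<tau>' t) (at t within {0..})"
    and \<tau>'_deriv: "\<forall>t\<ge>0. (\<tau>' has_real_derivative 2 * \<kappa> / \<tau> t) (at t within {0..})"
    and "0 \<le> t"
  shows "1/2 < \<tau> t"
proof (rule ccontr)
  assume "\<not> 1/2 < \<tau> t"
  define S where "S = {0..t} \<inter> \<tau> -` {..1/2}"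
  have "continuous_on {0..} \<tau>"
    using \<tau>_deriv by (intro DERIV_continuous_on) auto
  then have "closed S"
    unfolding S_def
    by (rule continuous_closed_preimage[OF continuous_on_subset]) auto
  moreover have "t \<in> S" "bdd_below S"
    using \<open>\<not> 1/2 < \<tau> t\<close> \<open>0 \<le> t\<close> by (auto simp: S_def)
  ultimately have c: "Inf S \<in> S"
    by (intro closed_contains_Inf) auto
  have above: "1/2 < \<tau> s" if "0 \<le> s" "s < Inf S" for s
    using cInf_lower[of s S] \<open>bdd_below S\<close> that c by (force simp: S_def)
  have "0 \<le> \<tau>' s" if "0 < s" "s < Inf S" for s
    using nondecreasing_if_derivative_nonneg[OF \<tau>'_deriv, of s] above \<open>0 < \<kappa>\<close> \<open>\<tau>' 0 = 0\<close> that
    by (smt (verit) divide_nonneg_pos)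
  then have "\<tau> 0 \<le> \<tau> (Inf S)"
    using c by (intro nondecreasing_if_derivative_nonneg[OF \<tau>_deriv]) (auto simp: S_def)
  with c \<open>\<tau> 0 = 1\<close> show False
    by (simp add: S_def)
qed

lemma energy_controls_sum:
  fixes A B X I G m M \<theta> \<kappa> \<Gamma> \<Lambda> :: real
  assumes "0 \<le> A" "0 \<le> B" "0 \<le> G" "0 < \<theta>" "0 < \<kappa>"
    and "- \<Gamma> \<le> X" "I \<le> m + 3 * X + 4 * \<Gamma>" "m \<le> M"
    and energy: "A + B + \<kappa> * X + G \<le> \<Lambda>"
  shows "A + B + \<kappa> * I + \<theta> * G
    \<le> (1 + \<theta>) * (\<bar>\<Lambda>\<bar> + \<kappa> * \<Gamma>) + \<kappa> * \<bar>M\<bar> + 3 * \<bar>\<Lambda>\<bar> + 4 * \<kappa> * \<Gamma>"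
proof -
  have "- (\<kappa> * \<Gamma>) \<le> \<kappa> * X"
    using mult_left_mono[OF \<open>- \<Gamma> \<le> X\<close>, of \<kappa>] \<open>0 < \<kappa>\<close> by simp
  with assms have rest: "A + B + G \<le> \<bar>\<Lambda>\<bar> + \<kappa> * \<Gamma>" and "\<kappa> * X \<le> \<bar>\<Lambda>\<bar>"
    by linarith+
  have "\<kappa> * I \<le> \<kappa> * (\<bar>M\<bar> + 3 * X + 4 * \<Gamma>)"
    using assms by (intro mult_left_mono) auto
  with \<open>\<kappa> * X \<le> \<bar>\<Lambda>\<bar>\<close> have "\<kappa> * I \<le> \<kappa> * \<bar>M\<bar> + 3 * \<bar>\<Lambda>\<bar> + 4 * \<kappa> * \<Gamma>"
    by (simp add: algebra_simps)
  moreover have "\<theta> * G \<le> \<theta> * (\<bar>\<Lambda>\<bar> + \<kappa> * \<Gamma>)"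
    using rest assms by (intro mult_left_mono) auto
  ultimately show ?thesis
    using rest assms by (simp add: algebra_simps)
qed

theorem lemma3p3:
  fixes P dP d2P :: "real \<Rightarrow> real"
    and \<kappa> \<epsilon> \<theta> \<Lambda> :: real
    and \<tau> \<tau>' :: "real \<Rightarrow> real"
    and R :: "real \<Rightarrow> 'a::euclidean_space \<Rightarrow> real"
    and U :: "real \<Rightarrow> 'a \<Rightarrow> 'a"
    and gR :: "real \<Rightarrow> 'a \<Rightarrow> 'a"
  assumes eps: "\<epsilon> \<ge> 0" and theta: "\<theta> > 0"
    and P_C1: "\<forall>x\<ge>0. (P has_real_derivative dP x) (at x within {0..})" "continuous_on {0..} dP"
    and P_C2: "\<forall>x>0. (dP has_real_derivative d2P x) (at x)" "continuous_on {0<..} d2P"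
    and P_nonneg: "\<forall>x\<ge>0. P x \<ge> 0"
    and P_convex: "convex_on {0..} P"
    and kappa: "\<kappa> = dP 0" "\<kappa> > 0"
    and tau: "\<tau> 0 = 1" "\<tau>' 0 = 0"
      "\<forall>t\<ge>0. (\<tau> has_real_derivative \<tau>' t) (at t within {0..})"
      "\<forall>t\<ge>0. (\<tau>' has_real_derivative 2 * \<kappa> / \<tau> t) (at t within {0..})"
    and R_nonneg: "\<forall>t\<ge>0. \<forall>y. R t y \<ge> 0"
    and R_int: "\<forall>t\<ge>0. integrable lborel (R t)"
    and RU_int: "\<forall>t\<ge>0. integrable lborel (\<lambda>y. R t y * (norm (U t y))\<^sup>2)"
    and grad: "\<forall>t\<ge>0. weak_gradient (\<lambda>y. sqrt (R t y)) (gR t)"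
    and grad_int: "\<forall>t\<ge>0. integrable lborel (\<lambda>y. (norm (gR t y))\<^sup>2)"
    and Ry_int: "\<forall>t\<ge>0. integrable lborel (\<lambda>y. R t y * (norm y)\<^sup>2)"
    and RlnR_int: "\<forall>t\<ge>0. integrable lborel (\<lambda>y. R t y * ln (R t y))"
    and G_fin: "\<forall>t\<ge>0. (\<integral>\<^sup>+ y. Gfun dP (\<theta> * R t y / \<tau> t ^ DIM('a)) \<partial>lborel) < \<infinity>"
    and mass: "\<exists>M. \<forall>t\<ge>0. (\<integral>y. R t y \<partial>lborel) \<le> M"
    and energy: "\<forall>t\<ge>0.
        1 / (2 * (\<tau> t)\<^sup>2) * (\<integral>y. R t y * (norm (U t y))\<^sup>2 \<partial>lborel)
      + \<epsilon>\<^sup>2 / (2 * (\<tau> t)\<^sup>2) * (\<integral>y. (norm (gR t y))\<^sup>2 \<partial>lborel)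
      + \<kappa> * ((\<integral>y. R t y * (norm y)\<^sup>2 \<partial>lborel) + (\<integral>y. R t y * ln (R t y) \<partial>lborel))
      + (\<tau> t) ^ DIM('a) / \<theta> *
          enn2real (\<integral>\<^sup>+ y. Gfun dP (\<theta> * R t y / \<tau> t ^ DIM('a)) \<partial>lborel)
      \<le> \<Lambda>"
  shows "\<exists>C0>0. \<forall>t\<ge>0.
        1 / (2 * (\<tau> t)\<^sup>2) * (\<integral>y. R t y * (norm (U t y))\<^sup>2 \<partial>lborel)
      + \<epsilon>\<^sup>2 / (2 * (\<tau> t)\<^sup>2) * (\<integral>y. (norm (gR t y))\<^sup>2 \<partial>lborel)
      + \<kappa> * (\<integral>y. R t y * (1 + (norm y)\<^sup>2 + \<bar>ln (R t y)\<bar>) \<partial>lborel)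
      + (\<tau> t) ^ DIM('a) *
          enn2real (\<integral>\<^sup>+ y. Gfun dP (\<theta> * R t y / \<tau> t ^ DIM('a)) \<partial>lborel)
      \<le> C0"
proof -
  obtain M where M: "\<And>t. 0 \<le> t \<Longrightarrow> (\<integral>y. R t y \<partial>lborel) \<le> M"
    using mass by blast
  define \<Gamma> where "\<Gamma> = (\<integral>(y::'a). exp (- (norm y)\<^sup>2 / 2) \<partial>lborel)"
  have "0 \<le> \<Gamma>"
    unfolding \<Gamma>_def by (rule Bochner_Integration.integral_nonneg) simp
  define C where "C = (1 + \<theta>) * (\<bar>\<Lambda>\<bar> + \<kappa> * \<Gamma>) + \<kappa> * \<bar>M\<bar> + 3 * \<bar>\<Lambda>\<bar> + 4 * \<kappa> * \<Gamma>"
  have "0 \<le> C"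
    unfolding C_def using theta kappa \<open>0 \<le> \<Gamma>\<close> by simp
  show ?thesis
  proof (intro exI[of _ "C + 1"] conjI allI impI)
    fix t :: real
    assume "0 \<le> t"
    let ?A = "1 / (2 * (\<tau> t)\<^sup>2) * (\<integral>y. R t y * (norm (U t y))\<^sup>2 \<partial>lborel)"
    let ?B = "\<epsilon>\<^sup>2 / (2 * (\<tau> t)\<^sup>2) * (\<integral>y. (norm (gR t y))\<^sup>2 \<partial>lborel)"
    let ?I = "\<integral>y. R t y * (1 + (norm y)\<^sup>2 + \<bar>ln (R t y)\<bar>) \<partial>lborel"
    let ?G = "enn2real (\<integral>\<^sup>+ y. Gfun dP (\<theta> * R t y / \<tau> t ^ DIM('a)) \<partial>lborel)"
    have R_t: "\<And>y. 0 \<le> R t y" "integrable lborel (\<lambda>y. R t y * (norm y)\<^sup>2)"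
        "integrable lborel (\<lambda>y. R t y * ln (R t y))" "integrable lborel (R t)"
      using R_nonneg R_int Ry_int RlnR_int \<open>0 \<le> t\<close> by auto
    have "0 < \<tau> t ^ DIM('a)"
      using tau_gt_half[OF kappa(2) tau \<open>0 \<le> t\<close>] by simp
    then have G_nonneg: "0 \<le> \<tau> t ^ DIM('a) / \<theta> * ?G"
      and G_scale: "\<tau> t ^ DIM('a) * ?G = \<theta> * (\<tau> t ^ DIM('a) / \<theta> * ?G)"
      using theta by simp_all
    have "0 \<le> ?A" "0 \<le> ?B"
      using R_t by (auto intro!: Bochner_Integration.integral_nonneg)
    from energy_controls_sum[OF this G_nonneg theta kappa(2)
        moment_plus_entropy_ge[OF R_t(1-3)] weighted_entropy_le[OF R_t] M[OF \<open>0 \<le> t\<close>]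
        energy[rule_format, OF \<open>0 \<le> t\<close>]]
    have "?A + ?B + \<kappa> * ?I + \<theta> * (\<tau> t ^ DIM('a) / \<theta> * ?G) \<le> C"
      unfolding C_def \<Gamma>_def .
    then show "?A + ?B + \<kappa> * ?I + \<tau> t ^ DIM('a) * ?G \<le> C + 1"
      unfolding G_scale by linarith
  qed (use \<open>0 \<le> C\<close> in simp)
qed

end
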